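(* For every $i\in\mathbb{N}$ there exists a one-way nondeterministic nonerasing stack automaton $A_i$ with $L(A_i)=L(x_i)$, where $x_i$ is Larsen's rewb defined below. In particular each $L(x_i)$ is a nonerasing stack language.
   Context: Alphabet $\Sigma=\{a_j^l,a_j^m,a_j^r : j\in\mathbb{N}\}$ (for fixed $i$ only the finitely many letters with $j\le i$ occur). Larsen's rewbs: $x_0=(a_0^la_0^ma_0^r)^\ast$ and $x_{i+1}=\big(a_{i+1}^l\,(_i\,x_i\,)_i\,a_{i+1}^m\,\backslash i\,a_{i+1}^r\big)^\ast$ for $i\ge0$ (capture labels are natural numbers $0,\dots,i-1$). Rewb semantics: with bracket symbols $[_j,]_j$ and number symbols $j$ for each label, $\mathcal{R}(x)$ is the regular language obtained by reading $x$ as a regular expression with $\backslash j$ as the letter $j$ and $(_j\beta)_j$ as $[_j\,\mathcal{R}(\beta)\,]_j$. Dereferencing: repeatedly take the leftmost number symbol $j$; if no $[_j$ lies to its left delete it; else take the nearest $[_j$ to its left; if no $]_j$ lies between them the result is undefined; else replace this $j$ by the string strictly between that $[_j$ and the first subsequent $]_j$ with all brackets erased; finally delete all brackets. $L(x)$ is the set of dereferenced strings of $\mathcal{R}(x)$. Stack automaton (SA): nondeterministic finite control, one-way read-only input, stack over $\Gamma$ with initial symbol $Z_0$ between bottom marker $\#$ and top marker $\$$; a pointer moves left/right reading symbols anywhere; only at the top symbol $Z$ may the machine replace $Z$ by $w\in\Gamma^\ast$; acceptance by final state after consuming the input. A nonerasing stack automaton is an SA in which every top replacement has the form $Z\mapsto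 Zw$ with $w\in\Gamma^\ast$. *)

theory Defs
  imports Main
begin

datatype letter = AL nat | AM nat | AR nat

datatype rewb =
    REmpty
  | REps
  | RLit letter
  | RCat rewb rewb
  | RAlt rewb rewb
  | RStar rewb
  | RCap nat rewb
  | RRef nat

datatype sym = Ch letter | Open nat | Close nat | Num nat

definition conc :: "'a list set \<Rightarrow> 'a list set \<Rightarrow> 'a list set" where
  "conc A B = {u @ v | u v. u \<in> A \<and> v \<in> B}"

definition kstar :: "'a list set \<Rightarrow> 'a list set" where
  "kstar A = {concat ws | ws. set ws \<subseteq> A}"

fun R :: "rewb \<Rightarrow> sym list set" where
  "R REmpty = {}"
| "R REps = {[]}"
| "R (RLit a) = {[Ch a]}"
| "R (RCat x y) = conc (R x) (R y)"
| "R (RAlt x y) = R x \<union> R y"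
| "R (RStar x) = kstar (R x)"
| "R (RCap j x) = conc {[Open j]} (conc (R x) {[Close j]})"
| "R (RRef j) = {[Num j]}"

definition letters :: "sym list \<Rightarrow> letter list" where
  "letters u = [a. Ch a \<leftarrow> u]"

(* Dereferencing.  deref_go u v: u is the already-processed prefix (it contains no
   number symbol), so the first number symbol of v is the leftmost number symbol of
   the whole string u @ v. *)
fun deref_go :: "sym list \<Rightarrow> sym list \<Rightarrow> letter list option" where
  "deref_go u [] = Some (letters u)"
| "deref_go u (Num j # v) =
     (if Open j \<notin> set u then deref_go u v
      else (let u2 = rev (takeWhile (\<lambda>s. s \<noteq> Open j) (rev u)) in
            if Close j \<notin> set u2 then None
            else deref_go (u @ map Ch (letters (takeWhile (\<lambda>s. s \<noteq> Close j) u2))) v))"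
| "deref_go u (s # v) = deref_go (u @ [s]) v"

definition deref :: "sym list \<Rightarrow> letter list option" where
  "deref w = deref_go [] w"

definition rewb_lang :: "rewb \<Rightarrow> letter list set" where
  "rewb_lang x = {w. \<exists>s \<in> R x. deref s = Some w}"

fun larsen :: "nat \<Rightarrow> rewb" where
  "larsen 0 = RStar (RCat (RLit (AL 0)) (RCat (RLit (AM 0)) (RLit (AR 0))))"
| "larsen (Suc i) = RStar (RCat (RLit (AL (Suc i)))
      (RCat (RCap i (larsen i)) (RCat (RLit (AM (Suc i))) (RCat (RRef i) (RLit (AR (Suc i)))))))"

datatype 'g stsym = Bot | Top | G 'g

datatype 'g action = MoveL | MoveR | Stay | Replace "'g list"

record ('q, 'g) sa =
  states :: "'q set"
  init :: 'q
  finals :: "'q set"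
  stack_alph :: "'g set"
  z0 :: 'g
  delta :: "('q \<times> letter option \<times> 'g stsym \<times> 'q \<times> 'g action) set"

definition sa_wf :: "('q, 'g) sa \<Rightarrow> bool" where
  "sa_wf A \<longleftrightarrow> finite (states A) \<and> finite (stack_alph A) \<and> finite (delta A)
     \<and> init A \<in> states A \<and> finals A \<subseteq> states A \<and> z0 A \<in> stack_alph A
     \<and> (\<forall>(q, a, X, q', act) \<in> delta A. q \<in> states A \<and> q' \<in> states A
          \<and> (\<forall>Z. X = G Z \<longrightarrow> Z \<in> stack_alph A)
          \<and> (\<forall>w. act = Replace w \<longrightarrow> set w \<subseteq> stack_alph A))"

definition nonerasing :: "('q, 'g) sa \<Rightarrow> bool" where
  "nonerasing A \<longleftrightarrow> (\<forall>(q, a, X, q', act) \<in> delta A.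
      \<forall>w. act = Replace w \<longrightarrow> (\<exists>Z w'. X = G Z \<and> w = Z # w'))"

(* stack contents s listed bottom to top; positions: 0 = #, 1..length s = stack
   symbols, length s + 1 = $ *)
definition sym_at :: "'g list \<Rightarrow> nat \<Rightarrow> 'g stsym" where
  "sym_at s p = (if p = 0 then Bot else if p \<le> length s then G (s ! (p - 1)) else Top)"

type_synonym ('q, 'g) config = "'q \<times> letter list \<times> 'g list \<times> nat"

definition sa_step :: "('q, 'g) sa \<Rightarrow> ('q, 'g) config \<Rightarrow> ('q, 'g) config \<Rightarrow> bool" where
  "sa_step A c c' \<longleftrightarrow> (case (c, c') of ((q, u, s, p), (q', u', s', p')) \<Rightarrow>
     \<exists>a X act. (q, a, X, q', act) \<in> delta A \<and> p \<le> length s + 1 \<and> X = sym_at s p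
       \<and> u = (case a of None \<Rightarrow> [] | Some b \<Rightarrow> [b]) @ u'
       \<and> (case act of
            MoveL \<Rightarrow> 0 < p \<and> s' = s \<and> p' = p - 1
          | MoveR \<Rightarrow> p \<le> length s \<and> s' = s \<and> p' = p + 1
          | Stay \<Rightarrow> s' = s \<and> p' = p
          | Replace w \<Rightarrow> s \<noteq> [] \<and> p = length s \<and> s' = butlast s @ w \<and> p' = length s'))"

definition sa_lang :: "('q, 'g) sa \<Rightarrow> letter list set" where
  "sa_lang A = {u. \<exists>q s p. (sa_step A)\<^sup>*\<^sup>* (init A, u, [z0 A], 1) (q, [], s, p) \<and> q \<in> finals A}"

end

theory Submission
  imports Defs "HOL-Library.Countable"
begin

text \<open>Dereferencing a string of R(x_i) replaces every back-reference by the letters of the capture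
  just before it, so L(x_i) = W_{i+1} (larsen_words (Suc i)) where W_0 = {\<epsilon>} and W_{n+1} consists of the concatenations of
  blocks a_n^l v a_n^m v a_n^r with v \<in> W_n.
  A nonerasing stack automaton recognises W_{i+1} by pushing a record of its input, except that the
  second copy of each block is not recorded but checked against the record of the first one: the
  pointer walks down to the marker of a_n^l and rereads the record upwards.  Whenever it meets the
  marker of a_j^r of a nested block, whose second copy was never recorded, it walks down again to the
  marker of that block's a_j^l and rereads the block.  The levels of the blocks being reread form a
  strictly increasing list of numbers \<le> i, so they fit into the finite control.\<close>

section \<open>The language of Larsen's rewbs\<close>

definition block :: "nat \<Rightarrow> letter list \<Rightarrow> letter list" where
  "block n v = AL n # v @ AM n # v @ [AR n]"

fun larsen_words :: "nat \<Rightarrow> letter list set" where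
  "larsen_words 0 = {[]}"
| "larsen_words (Suc n) = kstar (block n ` larsen_words n)"

lemma kstar_Nil: "[] \<in> kstar A"
  unfolding kstar_def by (rule CollectI, rule exI[of _ "[]"]) simp

lemma kstar_prepend:
  assumes "b \<in> A" "x \<in> kstar A"
  shows "b @ x \<in> kstar A"
proof -
  obtain ws where "x = concat ws" "set ws \<subseteq> A" using assms(2) unfolding kstar_def by auto
  then show ?thesis using assms(1) unfolding kstar_def by (intro CollectI exI[of _ "b # ws"]) auto
qed

lemma kstar_append:
  assumes "x \<in> kstar A" "b \<in> A"
  shows "x @ b \<in> kstar A"
proof -
  obtain ws where "x = concat ws" "set ws \<subseteq> A" using assms(1) unfolding kstar_def by auto
  then show ?thesis using assms(2) unfolding kstar_def by (intro CollectI exI[of _ "ws @ [b]"]) auto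
qed

lemma kstar_related:
  assumes "P [] []" "\<And>s t v w. P s v \<Longrightarrow> P t w \<Longrightarrow> P (s @ t) (v @ w)"
    and "\<forall>s\<in>S. \<exists>w\<in>W. P s w"
  shows "\<forall>s\<in>kstar S. \<exists>w\<in>kstar W. P s w"
proof
  fix s assume "s \<in> kstar S"
  then obtain ss where s: "s = concat ss" "set ss \<subseteq> S" unfolding kstar_def by auto
  have "\<exists>w\<in>kstar W. P (concat ss) w" using s(2)
  proof (induction ss)
    case Nil
    then show ?case using assms(1) kstar_Nil by auto
  next
    case (Cons s ss)
    then obtain w where w: "w \<in> kstar W" "P (concat ss) w" by auto
    obtain v where v: "v \<in> W" "P s v" using assms(3) Cons.prems by auto
    have "P (concat (s # ss)) (v @ w)" using assms(2)[OF v(2) w(2)] by simp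
    then show ?case using kstar_prepend[OF v(1) w(1)] by blast
  qed
  then show "\<exists>w\<in>kstar W. P s w" using s by simp
qed

lemma rel_set_kstar:
  assumes "P [] []" "\<And>s t v w. P s v \<Longrightarrow> P t w \<Longrightarrow> P (s @ t) (v @ w)" "rel_set P S W"
  shows "rel_set P (kstar S) (kstar W)"
proof -
  have "\<forall>s\<in>kstar S. \<exists>w\<in>kstar W. P s w"
    using kstar_related[of P S W] assms by (auto simp: rel_set_def)
  moreover have "\<forall>w\<in>kstar W. \<exists>s\<in>kstar S. P\<inverse>\<inverse> w s"
    using kstar_related[of "P\<inverse>\<inverse>" W S] assms by (auto simp: rel_set_def)
  ultimately show ?thesis by (auto simp: rel_set_def)
qed

lemma letters_append [simp]: "letters (xs @ ys) = letters xs @ letters ys"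
  by (simp add: letters_def)

lemma letters_simps [simp]:
  "letters [] = []" "letters (Ch a # xs) = a # letters xs" "letters (Open j # xs) = letters xs"
  "letters (Close j # xs) = letters xs" "letters (Num j # xs) = letters xs"
  by (simp_all add: letters_def)

lemma letters_map_Ch [simp]: "letters (map Ch w) = w"
  by (induction w) auto

definition resolves :: "sym list \<Rightarrow> sym list \<Rightarrow> bool" where
  "resolves s t \<longleftrightarrow> (\<forall>u v. deref_go u (s @ v) = deref_go (u @ t) v)"

definition labels_below :: "nat \<Rightarrow> sym list \<Rightarrow> bool" where
  "labels_below k t \<longleftrightarrow> (\<forall>j. Open j \<in> set t \<or> Close j \<in> set t \<longrightarrow> j < k)"

text \<open>The condition labels_below keeps the captures inside t from shadowing an enclosing capture k.\<close>

definition denotes :: "nat \<Rightarrow> sym list \<Rightarrow> letter list \<Rightarrow> bool" where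
  "denotes k s w \<longleftrightarrow> (\<exists>t. labels_below k t \<and> resolves s t \<and> letters t = w)"

lemma deref_eq_if_resolves: "resolves s t \<Longrightarrow> deref s = Some (letters t)"
  unfolding resolves_def deref_def by (metis append.right_neutral append_Nil deref_go.simps(1))

lemma denotes_Nil: "denotes k [] []"
  unfolding denotes_def resolves_def labels_below_def by (intro exI[of _ "[]"]) simp

lemma denotes_append:
  assumes "denotes k s v" "denotes k t w"
  shows "denotes k (s @ t) (v @ w)"
proof -
  obtain t1 t2 where "labels_below k t1" "resolves s t1" "letters t1 = v"
      "labels_below k t2" "resolves t t2" "letters t2 = w"
    using assms unfolding denotes_def by blast
  then show ?thesis
    unfolding denotes_def resolves_def labels_below_def by (intro exI[of _ "t1 @ t2"]) auto
qed

lemma deref_go_map_Ch: "deref_go u (map Ch w @ v) = deref_go (u @ map Ch w) v"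
  by (induction w arbitrary: u) auto

lemma denotes_map_Ch: "denotes k (map Ch w) w"
  unfolding denotes_def resolves_def labels_below_def
  by (intro exI[of _ "map Ch w"]) (auto simp: deref_go_map_Ch)

lemma deref_go_Num_capture:
  assumes "Open k \<notin> set t" "Close k \<notin> set t"
  shows "deref_go (u @ Open k # t @ [Close k, Ch m]) (Num k # v)
       = deref_go (u @ Open k # t @ [Close k, Ch m] @ map Ch (letters t)) v"
proof -
  have "takeWhile (\<lambda>s. s \<noteq> Open k) (rev t @ Open k # rev u) = rev t"
    using assms by (subst takeWhile_append2) auto
  moreover have "takeWhile (\<lambda>s. s \<noteq> Close k) (t @ [Close k, Ch m]) = t"
    using assms by (subst takeWhile_append2) auto
  ultimately show ?thesis using assms by (simp add: Let_def)
qed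

lemma denotes_capture:
  assumes "denotes k s v"
  shows "denotes (Suc k) (Ch l # Open k # s @ [Close k, Ch m, Num k, Ch r]) (l # v @ m # v @ [r])"
proof -
  obtain t where t: "labels_below k t" "resolves s t" "letters t = v"
    using assms unfolding denotes_def by blast
  have fresh: "Open k \<notin> set t" "Close k \<notin> set t" using t(1) by (auto simp: labels_below_def)
  let ?t' = "Ch l # Open k # t @ [Close k, Ch m] @ map Ch (letters t) @ [Ch r]"
  have "resolves (Ch l # Open k # s @ [Close k, Ch m, Num k, Ch r]) ?t'"
    unfolding resolves_def
  proof (intro allI)
    fix u w
    have "deref_go u ((Ch l # Open k # s @ [Close k, Ch m, Num k, Ch r]) @ w)
        = deref_go (u @ [Ch l, Open k]) (s @ Close k # Ch m # Num k # Ch r # w)"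
      by simp
    also have "\<dots> = deref_go ((u @ [Ch l]) @ Open k # t) (Close k # Ch m # Num k # Ch r # w)"
      using t(2) unfolding resolves_def by simp
    also have "\<dots> = deref_go ((u @ [Ch l]) @ Open k # t @ [Close k, Ch m]) (Num k # Ch r # w)"
      by simp
    also have "\<dots> = deref_go ((u @ [Ch l]) @ Open k # t @ [Close k, Ch m] @ map Ch (letters t)) (Ch r # w)"
      by (rule deref_go_Num_capture[OF fresh])
    also have "\<dots> = deref_go (u @ ?t') w"
      by simp
    finally show "deref_go u ((Ch l # Open k # s @ [Close k, Ch m, Num k, Ch r]) @ w)
        = deref_go (u @ ?t') w" .
  qed
  moreover have "labels_below (Suc k) ?t'" using t(1) by (auto simp: labels_below_def)
  ultimately show ?thesis unfolding denotes_def using t(3) by fastforce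
qed

lemma rewb_lang_eqI:
  assumes "rel_set (denotes k) (R x) W"
  shows "rewb_lang x = W"
proof -
  have deref: "deref s = Some w" if "denotes k s w" for s w
    using that deref_eq_if_resolves unfolding denotes_def by blast
  show ?thesis
  proof (intro set_eqI iffI)
    fix w assume "w \<in> rewb_lang x"
    then obtain s where "s \<in> R x" "deref s = Some w" by (auto simp: rewb_lang_def)
    moreover obtain w' where "w' \<in> W" "denotes k s w'" using assms \<open>s \<in> R x\<close> by (auto simp: rel_set_def)
    ultimately show "w \<in> W" using deref by fastforce
  next
    fix w assume "w \<in> W"
    then obtain s where "s \<in> R x" "denotes k s w" using assms by (auto simp: rel_set_def)
    then show "w \<in> rewb_lang x" using deref by (auto simp: rewb_lang_def)
  qed
qed

lemma rel_set_larsen: "rel_set (denotes k) (R (larsen k)) (larsen_words (Suc k))"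
proof (induction k)
  case 0
  have "rel_set (denotes 0) {map Ch [AL 0, AM 0, AR 0]} (block 0 ` larsen_words 0)"
    using denotes_map_Ch[of 0 "[AL 0, AM 0, AR 0]"] by (simp add: rel_set_def block_def)
  then show ?case
    by (simp add: conc_def rel_set_kstar denotes_Nil denotes_append)
next
  case (Suc k)
  let ?cap = "\<lambda>s. Ch (AL (Suc k)) # Open k # s @ [Close k, Ch (AM (Suc k)), Num k, Ch (AR (Suc k))]"
  have "R (RCat (RLit (AL (Suc k))) (RCat (RCap k (larsen k))
      (RCat (RLit (AM (Suc k))) (RCat (RRef k) (RLit (AR (Suc k))))))) = ?cap ` R (larsen k)"
    by (auto simp: conc_def)
  then have R_eq: "R (larsen (Suc k)) = kstar (?cap ` R (larsen k))"
    by simp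
  have caps: "rel_set (denotes (Suc k)) (?cap ` R (larsen k)) (block (Suc k) ` larsen_words (Suc k))"
    using Suc.IH denotes_capture unfolding rel_set_def block_def by fastforce
  show ?case
    unfolding R_eq larsen_words.simps(2)[of "Suc k"]
    by (rule rel_set_kstar[of "denotes (Suc k)", OF denotes_Nil denotes_append caps])
qed

lemma rewb_lang_larsen: "rewb_lang (larsen k) = larsen_words (Suc k)"
  by (rule rewb_lang_eqI[OF rel_set_larsen])

section \<open>Stack automata\<close>

definition list_of_opt :: "'a option \<Rightarrow> 'a list" where
  "list_of_opt a = (case a of None \<Rightarrow> [] | Some b \<Rightarrow> [b])"

lemma list_of_opt_simps [simp]: "list_of_opt None = []" "list_of_opt (Some b) = [b]"
  by (simp_all add: list_of_opt_def)

fun action_effect :: "'g action \<Rightarrow> 'g list \<Rightarrow> nat \<Rightarrow> 'g list \<Rightarrow> nat \<Rightarrow> bool" where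
  "action_effect MoveL s p s' p' \<longleftrightarrow> 0 < p \<and> s' = s \<and> p' = p - 1"
| "action_effect MoveR s p s' p' \<longleftrightarrow> p \<le> length s \<and> s' = s \<and> p' = p + 1"
| "action_effect Stay s p s' p' \<longleftrightarrow> s' = s \<and> p' = p"
| "action_effect (Replace w) s p s' p' \<longleftrightarrow> s \<noteq> [] \<and> p = length s \<and> s' = butlast s @ w \<and> p' = length s'"

lemma action_effect_deterministic:
  "action_effect act s p s1 p1 \<Longrightarrow> action_effect act s p s2 p2 \<Longrightarrow> s1 = s2 \<and> p1 = p2"
  by (cases act) auto

lemma sa_step_iff:
  "sa_step A (q, u, s, p) (q', u', s', p') \<longleftrightarrow> (\<exists>a act. (q, a, sym_at s p, q', act) \<in> delta A
     \<and> p \<le> length s + 1 \<and> u = list_of_opt a @ u' \<and> action_effect act s p s' p')"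
proof -
  have "(case act of MoveL \<Rightarrow> 0 < p \<and> s' = s \<and> p' = p - 1 | MoveR \<Rightarrow> p \<le> length s \<and> s' = s \<and> p' = p + 1
      | Stay \<Rightarrow> s' = s \<and> p' = p | Replace w \<Rightarrow> s \<noteq> [] \<and> p = length s \<and> s' = butlast s @ w \<and> p' = length s')
    = action_effect act s p s' p'" for act :: "'b action"
    by (cases act) auto
  then show ?thesis unfolding sa_step_def list_of_opt_def by auto
qed

lemma sa_stepE:
  assumes "sa_step A (q, u, s, p) (q', u', s', p')"
  obtains a act where "(q, a, sym_at s p, q', act) \<in> delta A" "p \<le> length s + 1"
    "u = list_of_opt a @ u'" "action_effect act s p s' p'"
  using assms unfolding sa_step_iff by blast

lemma sa_stepI:
  "(q, a, sym_at s p, q', act) \<in> delta A \<Longrightarrow> p \<le> length s + 1 \<Longrightarrow> action_effect act s p s' p'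
    \<Longrightarrow> sa_step A (q, list_of_opt a @ u', s, p) (q', u', s', p')"
  unfolding sa_step_iff by blast

lemma sym_at_nth: "0 < p \<Longrightarrow> p \<le> length s \<Longrightarrow> sym_at s p = G (s ! (p - 1))"
  by (simp add: sym_at_def)

lemma sym_at_length: "s \<noteq> [] \<Longrightarrow> sym_at s (length s) = G (last s)"
  by (simp add: sym_at_def last_conv_nth)

lemma butlast_append_last: "s \<noteq> [] \<Longrightarrow> butlast s @ last s # w = s @ w"
  by (metis append.assoc append_Cons append_Nil append_butlast_last_id)

lemma sa_step_push:
  assumes "(q, a, G (last s), q', Replace (last s # w)) \<in> delta A" "s \<noteq> []"
  shows "sa_step A (q, list_of_opt a @ u, s, length s) (q', u, s @ w, length (s @ w))"
  using sa_stepI[of q a s "length s"] assms sym_at_length[OF assms(2)] butlast_append_last[OF assms(2)]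
  by simp

definition sa_rename :: "('q \<Rightarrow> 'q2) \<Rightarrow> ('g \<Rightarrow> 'g2) \<Rightarrow> ('q, 'g) sa \<Rightarrow> ('q2, 'g2) sa" where
  "sa_rename f g A = \<lparr>states = f ` states A, init = f (init A), finals = f ` finals A,
     stack_alph = g ` stack_alph A, z0 = g (z0 A),
     delta = (\<lambda>(q, a, X, q', act). (f q, a, map_stsym g X, f q', map_action g act)) ` delta A\<rparr>"

lemma sa_rename_simps [simp]:
  "states (sa_rename f g A) = f ` states A" "init (sa_rename f g A) = f (init A)"
  "finals (sa_rename f g A) = f ` finals A" "stack_alph (sa_rename f g A) = g ` stack_alph A"
  "z0 (sa_rename f g A) = g (z0 A)"
  "delta (sa_rename f g A) = (\<lambda>(q, a, X, q', act). (f q, a, map_stsym g X, f q', map_action g act)) ` delta A"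
  by (simp_all add: sa_rename_def)

lemma sym_at_map: "sym_at (map g s) p = map_stsym g (sym_at s p)"
  by (simp add: sym_at_def)

lemma action_effect_map:
  "action_effect act s p s' p' \<Longrightarrow> action_effect (map_action g act) (map g s) p (map g s') p'"
  by (cases act) (auto simp: map_butlast)

lemma action_effect_map_inv:
  "action_effect (map_action g act) (map g s) p s2 p' \<Longrightarrow> \<exists>s'. s2 = map g s' \<and> action_effect act s p s' p'"
  by (cases act) (auto simp: map_butlast)

definition rename_config :: "('q \<Rightarrow> 'q2) \<Rightarrow> ('g \<Rightarrow> 'g2) \<Rightarrow> ('q, 'g) config \<Rightarrow> ('q2, 'g2) config" where
  "rename_config f g = (\<lambda>(q, u, s, p). (f q, u, map g s, p))"

lemma rename_config_simp [simp]: "rename_config f g (q, u, s, p) = (f q, u, map g s, p)"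
  by (simp add: rename_config_def)

lemma sa_step_rename:
  assumes "sa_step A c c'"
  shows "sa_step (sa_rename f g A) (rename_config f g c) (rename_config f g c')"
proof -
  obtain q u s p q' u' s' p' where c: "c = (q, u, s, p)" "c' = (q', u', s', p')"
    by (cases c, cases c') auto
  from assms[unfolded c] show ?thesis
  proof (rule sa_stepE)
    fix a act
    assume t: "(q, a, sym_at s p, q', act) \<in> delta A" "p \<le> length s + 1" "u = list_of_opt a @ u'"
      "action_effect act s p s' p'"
    have "(f q, a, sym_at (map g s) p, f q', map_action g act) \<in> delta (sa_rename f g A)"
      using t(1) by (force simp: sym_at_map)
    moreover have "action_effect (map_action g act) (map g s) p (map g s') p'"
      using t(4) by (rule action_effect_map)
    ultimately show ?thesis using sa_stepI t(2,3) c by fastforce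
  qed
qed

lemma sa_step_rename_inv:
  assumes "inj f" "inj g" "sa_step (sa_rename f g A) (rename_config f g c) c2"
  shows "\<exists>c'. c2 = rename_config f g c' \<and> sa_step A c c'"
proof -
  obtain q u s p q2 u' s2 p' where c: "c = (q, u, s, p)" "c2 = (q2, u', s2, p')"
    by (cases c, cases c2) auto
  from assms(3)[unfolded c rename_config_simp] show ?thesis
  proof (rule sa_stepE)
    fix a act2
    assume t: "(f q, a, sym_at (map g s) p, q2, act2) \<in> delta (sa_rename f g A)"
      "p \<le> length (map g s) + 1" "u = list_of_opt a @ u'"
      "action_effect act2 (map g s) p s2 p'"
    obtain q0 X q' act where o: "(q0, a, X, q', act) \<in> delta A" "f q0 = f q"
        "sym_at (map g s) p = map_stsym g X" "q2 = f q'" "act2 = map_action g act"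
      using t(1) by auto
    have "q0 = q" using o(2) assms(1) by (simp add: inj_eq)
    moreover have "X = sym_at s p"
      using o(3) sym_at_map stsym.inj_map[OF assms(2)] by (metis injD)
    ultimately have tA: "(q, a, sym_at s p, q', act) \<in> delta A" using o(1) by simp
    obtain s' where "s2 = map g s'" "action_effect act s p s' p'"
      using action_effect_map_inv t(4) o(5) by blast
    then show ?thesis using sa_stepI[OF tA] t(2,3) c o(4) by fastforce
  qed
qed

lemma sa_run_rename:
  "(sa_step A)\<^sup>*\<^sup>* c c' \<Longrightarrow> (sa_step (sa_rename f g A))\<^sup>*\<^sup>* (rename_config f g c) (rename_config f g c')"
  by (induction rule: rtranclp_induct) (auto intro: rtranclp.rtrancl_into_rtrancl sa_step_rename)

lemma sa_run_rename_inv: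
  assumes "inj f" "inj g" "(sa_step (sa_rename f g A))\<^sup>*\<^sup>* (rename_config f g c) c2"
  shows "\<exists>c'. c2 = rename_config f g c' \<and> (sa_step A)\<^sup>*\<^sup>* c c'"
  using assms(3)
proof (induction rule: rtranclp_induct)
  case (step c1 c3)
  then obtain c1' where "c1 = rename_config f g c1'" "(sa_step A)\<^sup>*\<^sup>* c c1'" by blast
  moreover obtain c3' where "c3 = rename_config f g c3'" "sa_step A c1' c3'"
    using sa_step_rename_inv[OF assms(1,2)] step.hyps(2) calculation(1) by blast
  ultimately show ?case by (blast intro: rtranclp.rtrancl_into_rtrancl)
qed blast

lemma sa_lang_rename:
  assumes "inj f" "inj g"
  shows "sa_lang (sa_rename f g A) = sa_lang A"
proof
  show "sa_lang (sa_rename f g A) \<subseteq> sa_lang A"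
  proof
    fix w assume "w \<in> sa_lang (sa_rename f g A)"
    then obtain q s p where r: "(sa_step (sa_rename f g A))\<^sup>*\<^sup>* (rename_config f g (init A, w, [z0 A], 1)) (q, [], s, p)"
        "q \<in> f ` finals A"
      unfolding sa_lang_def by auto
    obtain q' u' s' p' where run: "(q, [], s, p) = rename_config f g (q', u', s', p')"
        "(sa_step A)\<^sup>*\<^sup>* (init A, w, [z0 A], 1) (q', u', s', p')"
      using sa_run_rename_inv[OF assms r(1)] by (metis prod_cases4)
    moreover have "q' \<in> finals A" using r(2) run(1) assms(1) by (auto simp: inj_eq)
    ultimately show "w \<in> sa_lang A" unfolding sa_lang_def by auto
  qed
  show "sa_lang A \<subseteq> sa_lang (sa_rename f g A)"
    unfolding sa_lang_def using sa_run_rename[of A "(init A, _, [z0 A], 1)" "(_, [], _, _)" f g] by fastforce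
qed

lemma sa_wf_rename:
  assumes "sa_wf A"
  shows "sa_wf (sa_rename f g A)"
proof -
  have "q \<in> f ` states A \<and> q' \<in> f ` states A \<and> (\<forall>Z. X = G Z \<longrightarrow> Z \<in> g ` stack_alph A)
      \<and> (\<forall>w. act = Replace w \<longrightarrow> set w \<subseteq> g ` stack_alph A)"
    if mem: "(q, a, X, q', act) \<in> delta (sa_rename f g A)" for q a X q' act
  proof -
    obtain q0 X0 q0' act0 where t: "(q0, a, X0, q0', act0) \<in> delta A" "q = f q0" "X = map_stsym g X0"
        "q' = f q0'" "act = map_action g act0"
      using mem by auto
    have "q0 \<in> states A" "q0' \<in> states A" "\<forall>Z. X0 = G Z \<longrightarrow> Z \<in> stack_alph A"
        "\<forall>w. act0 = Replace w \<longrightarrow> set w \<subseteq> stack_alph A"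
      using assms t(1) unfolding sa_wf_def by fastforce+
    then show ?thesis using t(2-5) by (cases X0; cases act0) auto
  qed
  then have "\<forall>(q, a, X, q', act) \<in> delta (sa_rename f g A). q \<in> f ` states A \<and> q' \<in> f ` states A
      \<and> (\<forall>Z. X = G Z \<longrightarrow> Z \<in> g ` stack_alph A) \<and> (\<forall>w. act = Replace w \<longrightarrow> set w \<subseteq> g ` stack_alph A)"
    by blast
  then show ?thesis using assms unfolding sa_wf_def by auto
qed

lemma nonerasing_rename:
  assumes "nonerasing A"
  shows "nonerasing (sa_rename f g A)"
  unfolding nonerasing_def
proof clarsimp
  fix q a X q' act w
  assume t: "(q, a, X, q', act) \<in> delta A" and r: "map_action g act = Replace w"
  obtain w0 where w0: "act = Replace w0" "w = map g w0" using r by (cases act) auto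
  obtain Z w' where "X = G Z" "w0 = Z # w'" using assms t w0 unfolding nonerasing_def by fastforce
  then show "\<exists>Z. map_stsym g X = G Z \<and> (\<exists>w'. w = Z # w')" using w0 by auto
qed

section \<open>A nonerasing stack automaton for Larsen's languages\<close>

text \<open>In Scan n the automaton reads a word of W_n inside open blocks of levels n, ..., i.  In Seek hs
  and Compare hs it walks down to, respectively rereads, the record of a block of level hd hs; the
  blocks of the levels in tl hs wait for the rest of their reread.\<close>

datatype state = Scan nat | Seek "nat list" | Compare "nat list"

datatype mark = Base | LMark nat | MMark nat | RMark nat

fun mark_below :: "nat \<Rightarrow> mark \<Rightarrow> bool" where
  "mark_below n Base = False"
| "mark_below n (LMark j) = (j < n)"
| "mark_below n (MMark j) = (j < n)"
| "mark_below n (RMark j) = (j < n)"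

definition level_stacks :: "nat \<Rightarrow> nat list set" where
  "level_stacks i = {hs. hs \<noteq> [] \<and> sorted_wrt (<) hs \<and> set hs \<subseteq> {..i}}"

definition larsen_states :: "nat \<Rightarrow> state set" where
  "larsen_states i = Scan ` {..Suc i} \<union> Seek ` level_stacks i \<union> Compare ` level_stacks i"

definition larsen_marks :: "nat \<Rightarrow> mark set" where
  "larsen_marks i = insert Base {x. mark_below (Suc i) x}"

definition larsen_letters :: "nat \<Rightarrow> letter set" where
  "larsen_letters i = AL ` {..i} \<union> AM ` {..i} \<union> AR ` {..i}"

definition larsen_move :: "state \<times> letter option \<times> mark stsym \<times> state \<times> mark action \<Rightarrow> bool" where
  "larsen_move t \<longleftrightarrow> (case t of (q, a, X, q', act) \<Rightarrow>
     (\<exists>n Z. q = Scan (Suc n) \<and> a = Some (AL n) \<and> X = G Z \<and> q' = Scan n \<and> act = Replace [Z, LMark n])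
   \<or> (\<exists>n Z. q = Scan n \<and> a = Some (AM n) \<and> X = G Z \<and> q' = Seek [n] \<and> act = Replace [Z, MMark n])
   \<or> (\<exists>h hs Z. q = Seek (h # hs) \<and> X = G Z \<and> Z \<noteq> LMark h \<and> a = None \<and> q' = q \<and> act = MoveL)
   \<or> (\<exists>h hs. q = Seek (h # hs) \<and> X = G (LMark h) \<and> a = None \<and> q' = Compare (h # hs) \<and> act = MoveR)
   \<or> (\<exists>h hs j. q = Compare (h # hs) \<and> j < h \<and> X = G (LMark j) \<and> a = Some (AL j) \<and> q' = q \<and> act = MoveR)
   \<or> (\<exists>h hs j. q = Compare (h # hs) \<and> j < h \<and> X = G (MMark j) \<and> a = Some (AM j) \<and> q' = q \<and> act = MoveR)
   \<or> (\<exists>h hs. q = Compare (h # hs) \<and> hs \<noteq> [] \<and> X = G (MMark h) \<and> a = None \<and> q' = q \<and> act = MoveR)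
   \<or> (\<exists>h. q = Compare [h] \<and> X = G (MMark h) \<and> a = Some (AR h) \<and> q' = Scan (Suc h)
          \<and> act = Replace [MMark h, RMark h])
   \<or> (\<exists>h hs j. q = Compare (h # hs) \<and> j < h \<and> X = G (RMark j) \<and> a = None \<and> q' = Seek (j # h # hs)
          \<and> act = MoveL)
   \<or> (\<exists>h hs. q = Compare (h # hs) \<and> X = G (RMark h) \<and> a = Some (AR h) \<and> q' = Compare hs \<and> act = MoveR))"

definition larsen_delta :: "nat \<Rightarrow> (state \<times> letter option \<times> mark stsym \<times> state \<times> mark action) set" where
  "larsen_delta i = {t. larsen_move t \<and> (case t of (q, a, X, q', act) \<Rightarrow>
     q \<in> larsen_states i \<and> q' \<in> larsen_states i \<and> (\<forall>Z. X = G Z \<longrightarrow> Z \<in> larsen_marks i)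
     \<and> (\<forall>w. act = Replace w \<longrightarrow> set w \<subseteq> larsen_marks i \<and> length w = 2)
     \<and> (\<forall>b. a = Some b \<longrightarrow> b \<in> larsen_letters i))}"

definition larsen_sa :: "nat \<Rightarrow> (state, mark) sa" where
  "larsen_sa i = \<lparr>states = larsen_states i, init = Scan (Suc i), finals = {Scan (Suc i)},
     stack_alph = larsen_marks i, z0 = Base, delta = larsen_delta i\<rparr>"

lemma larsen_sa_simps [simp]:
  "init (larsen_sa i) = Scan (Suc i)" "finals (larsen_sa i) = {Scan (Suc i)}"
  "z0 (larsen_sa i) = Base" "delta (larsen_sa i) = larsen_delta i"
  by (simp_all add: larsen_sa_def)

lemma level_stacks_Cons: "h # hs \<in> level_stacks i \<Longrightarrow> j < h \<Longrightarrow> j # h # hs \<in> level_stacks i"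
  by (auto simp: level_stacks_def)

lemma level_stacks_tl: "h # hs \<in> level_stacks i \<Longrightarrow> hs \<noteq> [] \<Longrightarrow> hs \<in> level_stacks i"
  by (auto simp: level_stacks_def)

lemma level_stacks_single: "h \<le> i \<Longrightarrow> [h] \<in> level_stacks i"
  by (auto simp: level_stacks_def)

lemma level_stacks_hd: "h # hs \<in> level_stacks i \<Longrightarrow> h \<le> i"
  by (auto simp: level_stacks_def)

lemma level_stacks_finite: "finite (level_stacks i)"
proof (rule finite_subset)
  show "level_stacks i \<subseteq> {hs. set hs \<subseteq> {..i} \<and> length hs \<le> Suc i}"
  proof
    fix hs assume "hs \<in> level_stacks i"
    then have "distinct hs" "set hs \<subseteq> {..i}" by (auto simp: level_stacks_def strict_sorted_iff)
    then show "hs \<in> {hs. set hs \<subseteq> {..i} \<and> length hs \<le> Suc i}"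
      using card_mono[of "{..i}" "set hs"] distinct_card[of hs] by simp
  qed
qed (rule finite_lists_length_le, simp)

lemmas larsen_delta_defs = larsen_delta_def larsen_move_def larsen_states_def larsen_marks_def larsen_letters_def

lemma move_scan_AL:
  "n \<le> i \<Longrightarrow> Z \<in> larsen_marks i \<Longrightarrow> (Scan (Suc n), Some (AL n), G Z, Scan n, Replace [Z, LMark n]) \<in> larsen_delta i"
  by (auto simp: larsen_delta_defs)

lemma move_scan_AM:
  "n \<le> i \<Longrightarrow> Z \<in> larsen_marks i \<Longrightarrow> (Scan n, Some (AM n), G Z, Seek [n], Replace [Z, MMark n]) \<in> larsen_delta i"
  by (auto simp: larsen_delta_defs intro: level_stacks_single)

lemma move_seek_left:
  "h # hs \<in> level_stacks i \<Longrightarrow> Z \<in> larsen_marks i \<Longrightarrow> Z \<noteq> LMark h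
    \<Longrightarrow> (Seek (h # hs), None, G Z, Seek (h # hs), MoveL) \<in> larsen_delta i"
  by (auto simp: larsen_delta_defs)

lemma move_seek_found:
  "h # hs \<in> level_stacks i \<Longrightarrow> (Seek (h # hs), None, G (LMark h), Compare (h # hs), MoveR) \<in> larsen_delta i"
  by (auto simp: larsen_delta_defs dest: level_stacks_hd)

lemma move_compare_AL:
  "h # hs \<in> level_stacks i \<Longrightarrow> j < h
    \<Longrightarrow> (Compare (h # hs), Some (AL j), G (LMark j), Compare (h # hs), MoveR) \<in> larsen_delta i"
  by (auto simp: larsen_delta_defs dest: level_stacks_hd)

lemma move_compare_AM:
  "h # hs \<in> level_stacks i \<Longrightarrow> j < h
    \<Longrightarrow> (Compare (h # hs), Some (AM j), G (MMark j), Compare (h # hs), MoveR) \<in> larsen_delta i"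
  by (auto simp: larsen_delta_defs dest: level_stacks_hd)

lemma move_compare_skip:
  "h # hs \<in> level_stacks i \<Longrightarrow> hs \<noteq> []
    \<Longrightarrow> (Compare (h # hs), None, G (MMark h), Compare (h # hs), MoveR) \<in> larsen_delta i"
  by (auto simp: larsen_delta_defs dest: level_stacks_hd)

lemma move_compare_done:
  "h \<le> i \<Longrightarrow> (Compare [h], Some (AR h), G (MMark h), Scan (Suc h), Replace [MMark h, RMark h]) \<in> larsen_delta i"
  by (auto simp: larsen_delta_defs intro: level_stacks_single)

lemma move_compare_ref:
  "h # hs \<in> level_stacks i \<Longrightarrow> j < h
    \<Longrightarrow> (Compare (h # hs), None, G (RMark j), Seek (j # h # hs), MoveL) \<in> larsen_delta i"
  by (auto simp: larsen_delta_defs dest: level_stacks_hd intro: level_stacks_Cons)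

lemma move_compare_return:
  "h # hs \<in> level_stacks i \<Longrightarrow> hs \<noteq> []
    \<Longrightarrow> (Compare (h # hs), Some (AR h), G (RMark h), Compare hs, MoveR) \<in> larsen_delta i"
  by (auto simp: larsen_delta_defs dest: level_stacks_hd intro: level_stacks_tl)

lemma larsen_move_deterministic:
  "larsen_move (q, a, X, q1, act1) \<Longrightarrow> larsen_move (q, a', X, q2, act2) \<Longrightarrow> \<forall>m. q \<noteq> Scan m
    \<Longrightarrow> a = a' \<and> q1 = q2 \<and> act1 = act2"
  unfolding larsen_move_def by auto

lemma larsen_move_not_Scan:
  "larsen_move (q, a, X, q1, act) \<Longrightarrow> \<forall>m. q \<noteq> Scan m \<Longrightarrow> \<forall>w. act \<noteq> Replace w \<Longrightarrow> \<forall>m. q1 \<noteq> Scan m"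
  unfolding larsen_move_def by auto

lemma larsen_sa_wf: "sa_wf (larsen_sa i)"
proof -
  have marks: "finite (larsen_marks i)"
  proof (rule finite_subset)
    show "larsen_marks i \<subseteq> insert Base (LMark ` {..i} \<union> MMark ` {..i} \<union> RMark ` {..i})"
    proof
      fix x assume "x \<in> larsen_marks i"
      then show "x \<in> insert Base (LMark ` {..i} \<union> MMark ` {..i} \<union> RMark ` {..i})"
        by (cases x) (auto simp: larsen_marks_def)
    qed
  qed simp
  have states: "finite (larsen_states i)"
    unfolding larsen_states_def using level_stacks_finite by simp
  let ?acts = "insert MoveL (insert MoveR (insert Stay
      (Replace ` {w. set w \<subseteq> larsen_marks i \<and> length w = 2})))"
  have "larsen_delta i \<subseteq> larsen_states i \<times> insert None (Some ` larsen_letters i)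
      \<times> insert Bot (insert Top (G ` larsen_marks i)) \<times> larsen_states i \<times> ?acts"
  proof
    fix t assume "t \<in> larsen_delta i"
    then show "t \<in> larsen_states i \<times> insert None (Some ` larsen_letters i)
      \<times> insert Bot (insert Top (G ` larsen_marks i)) \<times> larsen_states i \<times> ?acts"
      by (cases t, rename_tac q a X q' act, case_tac a; case_tac X; case_tac act)
        (auto simp: larsen_delta_def)
  qed
  moreover have "finite (larsen_states i \<times> insert None (Some ` larsen_letters i)
      \<times> insert Bot (insert Top (G ` larsen_marks i)) \<times> larsen_states i \<times> ?acts)"
    using states marks finite_lists_length_eq[OF marks] by (simp add: larsen_letters_def)
  ultimately have "finite (larsen_delta i)" by (rule finite_subset)
  then show ?thesis
    unfolding sa_wf_def larsen_sa_def using states marks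
    by (auto simp: larsen_states_def larsen_marks_def larsen_delta_def)
qed

lemma larsen_sa_nonerasing: "nonerasing (larsen_sa i)"
  unfolding nonerasing_def by (auto simp: larsen_delta_def larsen_move_def)

text \<open>The record of a word of W_n: the second copy of each block is represented by its RMark alone.\<close>

inductive encodes :: "nat \<Rightarrow> letter list \<Rightarrow> mark list \<Rightarrow> bool" where
  encodes_Nil: "encodes n [] []"
| encodes_block: "encodes (Suc n) w c \<Longrightarrow> encodes n v d
    \<Longrightarrow> encodes (Suc n) (w @ block n v) (c @ LMark n # d @ [MMark n, RMark n])"

lemma mark_below_mono: "mark_below n x \<Longrightarrow> n \<le> m \<Longrightarrow> mark_below m x"
  by (cases x) auto

lemma encodes_mark_below: "encodes n w d \<Longrightarrow> x \<in> set d \<Longrightarrow> mark_below n x"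
  by (induction rule: encodes.induct) (auto intro: mark_below_mono)

lemma encodes_marks: "encodes k w d \<Longrightarrow> k \<le> Suc i \<Longrightarrow> set d \<subseteq> larsen_marks i"
  using encodes_mark_below mark_below_mono unfolding larsen_marks_def by blast

lemma encodes_larsen_words: "encodes n w d \<Longrightarrow> w \<in> larsen_words n"
proof (induction rule: encodes.induct)
  case (encodes_Nil n)
  then show ?case by (cases n) (auto intro: kstar_Nil)
next
  case (encodes_block n w c v d)
  then show ?case by (auto intro: kstar_append)
qed

lemma larsen_words_encodes: "w \<in> larsen_words n \<Longrightarrow> \<exists>d. encodes n w d"
proof (induction n arbitrary: w)
  case 0
  then show ?case by (auto intro: encodes_Nil)
next
  case (Suc n)
  then obtain ws where ws: "w = concat ws" "set ws \<subseteq> block n ` larsen_words n"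
    by (auto simp: kstar_def)
  have "\<exists>d. encodes (Suc n) (concat ws) d" using ws(2)
  proof (induction ws rule: rev_induct)
    case Nil
    then show ?case by (auto intro: encodes_Nil)
  next
    case (snoc b ws)
    then obtain c where c: "encodes (Suc n) (concat ws) c" by auto
    obtain v where v: "b = block n v" "v \<in> larsen_words n" using snoc.prems by auto
    obtain d where "encodes n v d" using Suc.IH v(2) by blast
    then show ?case using encodes_block[OF c] v by auto
  qed
  then show ?case using ws by simp
qed

inductive walk :: "nat \<Rightarrow> mark list \<Rightarrow> state \<times> nat \<Rightarrow> letter list \<Rightarrow> state \<times> nat \<Rightarrow> bool" for i s where
  walk_refl: "walk i s c [] c"
| walk_step: "(q, a, sym_at s p, q1, act) \<in> larsen_delta i \<Longrightarrow> p \<le> length s + 1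
    \<Longrightarrow> act \<in> {MoveL, MoveR} \<Longrightarrow> action_effect act s p s p1
    \<Longrightarrow> walk i s (q1, p1) z c \<Longrightarrow> walk i s (q, p) (list_of_opt a @ z) c"

lemma walk_trans: "walk i s c1 z1 c2 \<Longrightarrow> walk i s c2 z2 c3 \<Longrightarrow> walk i s c1 (z1 @ z2) c3"
  by (induction rule: walk.induct) (auto intro: walk.intros)

lemma walk_single:
  "(q, a, X, q1, act) \<in> larsen_delta i \<Longrightarrow> sym_at s p = X \<Longrightarrow> p \<le> length s + 1
    \<Longrightarrow> act \<in> {MoveL, MoveR} \<Longrightarrow> action_effect act s p s p1
    \<Longrightarrow> walk i s (q, p) (list_of_opt a) (q1, p1)"
  using walk_step[OF _ _ _ _ walk_refl] by fastforce

lemma walk_cases: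
  assumes "walk i s (q, p) z e"
  obtains (refl) "(q, p) = e" "z = []"
  | (step) a1 q1 act1 p1 z1 where "(q, a1, sym_at s p, q1, act1) \<in> larsen_delta i"
      "act1 \<in> {MoveL, MoveR}" "action_effect act1 s p s p1"
      "walk i s (q1, p1) z1 e" "z = list_of_opt a1 @ z1"
  using assms by (cases rule: walk.cases) auto

lemma walk_run:
  "walk i s c z c' \<Longrightarrow> (sa_step (larsen_sa i))\<^sup>*\<^sup>* (fst c, z @ u, s, snd c) (fst c', u, s, snd c')"
proof (induction rule: walk.induct)
  case (walk_refl c)
  then show ?case by simp
next
  case (walk_step q a p q1 act p1 z c)
  have "sa_step (larsen_sa i) (q, list_of_opt a @ z @ u, s, p) (q1, z @ u, s, p1)"
    using sa_stepI[of q a s p q1 act "larsen_sa i" s p1 "z @ u"] walk_step.hyps(1,2,4) by simp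
  then show ?case using walk_step.IH by simp
qed

lemma walk_seek:
  assumes "h # hs \<in> level_stacks i" "set s \<subseteq> larsen_marks i" "0 < a" "a \<le> p" "p \<le> length s"
    "s ! (a - 1) = LMark h" "\<forall>k. a < k \<and> k \<le> p \<longrightarrow> s ! (k - 1) \<noteq> LMark h"
  shows "walk i s (Seek (h # hs), p) [] (Compare (h # hs), a + 1)"
  using assms(4-7)
proof (induction "p - a" arbitrary: p)
  case 0
  then show ?case
    using walk_single[OF move_seek_found[OF assms(1)], of s p "a + 1"] assms(3) by (simp add: sym_at_nth)
next
  case (Suc x)
  have p: "0 < p" using Suc assms(3) by simp
  have "s ! (p - 1) \<in> larsen_marks i"
    using assms(2) Suc.prems(2) p by (metis Suc_diff_1 Suc_le_lessD nth_mem subsetD)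
  moreover have "s ! (p - 1) \<noteq> LMark h" using Suc.prems Suc.hyps(2) by auto
  ultimately have "walk i s (Seek (h # hs), p) [] (Seek (h # hs), p - 1)"
    using walk_single[OF move_seek_left[OF assms(1)], of "s ! (p - 1)" s p "p - 1"] p Suc.prems(2)
    by (simp add: sym_at_nth)
  moreover have "walk i s (Seek (h # hs), p - 1) [] (Compare (h # hs), a + 1)"
    by (rule Suc.hyps(1)) (use Suc.hyps(2) Suc.prems in auto)
  ultimately show ?case using walk_trans by fastforce
qed

lemma encodes_no_LMark:
  assumes "encodes n v d" "s = pre @ LMark n # d @ MMark n # post"
  shows "\<forall>k. Suc (length pre) < k \<and> k \<le> length pre + length d + 2 \<longrightarrow> s ! (k - 1) \<noteq> LMark n"
proof (intro allI impI)
  fix k assume k: "Suc (length pre) < k \<and> k \<le> length pre + length d + 2"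
  define j where "j = k - 2 - length pre"
  have "k - 1 = length (pre @ [LMark n]) + j" using k unfolding j_def by auto
  then have "s ! (k - 1) = (d @ [MMark n]) ! j"
    using assms(2) k unfolding j_def by (auto simp: nth_append)
  moreover have "j \<le> length d" using k unfolding j_def by auto
  ultimately show "s ! (k - 1) \<noteq> LMark n"
    using encodes_mark_below[OF assms(1) nth_mem, of j] by (cases "j = length d") (auto simp: nth_append)
qed

lemma walk_compare:
  assumes "encodes m v d" "m \<le> h" "h # hs \<in> level_stacks i" "s = pre @ d @ post"
    "set s \<subseteq> larsen_marks i"
  shows "walk i s (Compare (h # hs), Suc (length pre)) v (Compare (h # hs), Suc (length pre + length d))"
  using assms
proof (induction arbitrary: pre post h hs rule: encodes.induct)
  case (encodes_Nil n)
  then show ?case by (simp add: walk_refl)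
next
  case (encodes_block n w c v d)
  define P1 where "P1 = Suc (length pre + length c)"
  define P2 where "P2 = Suc (length pre + length c + 1 + length d)"
  have s: "s = (pre @ c @ [LMark n]) @ d @ (MMark n # RMark n # post)" using encodes_block.prems by simp
  have ls: "length s = length pre + length c + length d + 3 + length post" using s by simp
  have nh: "n < h" using encodes_block.prems by simp
  have stack: "n # h # hs \<in> level_stacks i" using level_stacks_Cons[OF encodes_block.prems(2) nh] .
  have sP1: "s ! (P1 - 1) = LMark n" "sym_at s P1 = G (LMark n)"
    using s ls unfolding P1_def by (simp_all add: nth_append sym_at_nth)
  have sP2: "sym_at s P2 = G (MMark n)" "sym_at s (P2 + 1) = G (RMark n)"
    using s ls unfolding P2_def by (simp_all add: nth_append sym_at_nth)
  have "walk i s (Compare (h # hs), Suc (length pre)) w (Compare (h # hs), P1)"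
    using encodes_block.IH(1)[of h hs pre "LMark n # d @ [MMark n, RMark n] @ post"] encodes_block.prems
    unfolding P1_def by simp
  moreover have "walk i s (Compare (h # hs), P1) [AL n] (Compare (h # hs), P1 + 1)"
    using walk_single[OF move_compare_AL[OF encodes_block.prems(2) nh], of s P1 "P1 + 1"] sP1 ls
    unfolding P1_def by simp
  \<comment> \<open>the record of v is read twice: as the first copy, and again after seeking back from RMark n\<close>
  moreover have copy: "walk i s (Compare (h' # hs'), P1 + 1) v (Compare (h' # hs'), P2)"
    if "n \<le> h'" "h' # hs' \<in> level_stacks i" for h' hs'
    using encodes_block.IH(2)[of h' hs' "pre @ c @ [LMark n]" "MMark n # RMark n # post"]
      encodes_block.prems s that unfolding P1_def P2_def by simp
  moreover have "walk i s (Compare (h # hs), P2) [AM n] (Compare (h # hs), P2 + 1)"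
    using walk_single[OF move_compare_AM[OF encodes_block.prems(2) nh], of s P2 "P2 + 1"] sP2 ls
    unfolding P2_def by simp
  moreover have "walk i s (Compare (h # hs), P2 + 1) [] (Seek (n # h # hs), P2)"
    using walk_single[OF move_compare_ref[OF encodes_block.prems(2) nh], of s "P2 + 1" P2] sP2 ls
    unfolding P2_def by simp
  moreover have "walk i s (Seek (n # h # hs), P2) [] (Compare (n # h # hs), P1 + 1)"
  proof (rule walk_seek[OF stack encodes_block.prems(4)])
    show "\<forall>k. P1 < k \<and> k \<le> P2 \<longrightarrow> s ! (k - 1) \<noteq> LMark n"
      using encodes_no_LMark[OF encodes_block.hyps(2), of s "pre @ c" "RMark n # post"] s
      unfolding P1_def P2_def by simp
  qed (use sP1 ls in \<open>auto simp: P1_def P2_def\<close>)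
  moreover have "walk i s (Compare (n # h # hs), P2) [] (Compare (n # h # hs), P2 + 1)"
    using walk_single[OF move_compare_skip[OF stack], of s P2 "P2 + 1"] sP2 ls unfolding P2_def by simp
  moreover have "walk i s (Compare (n # h # hs), P2 + 1) [AR n] (Compare (h # hs), P2 + 2)"
    using walk_single[OF move_compare_return[OF stack], of s "P2 + 1" "P2 + 2"] sP2 ls
    unfolding P2_def by simp
  ultimately have "walk i s (Compare (h # hs), Suc (length pre))
     (w @ [AL n] @ v @ [AM n] @ [] @ [] @ v @ [] @ [AR n]) (Compare (h # hs), P2 + 2)"
    using encodes_block.prems(2) stack nh by (meson le_refl less_imp_le_nat walk_trans)
  then show ?case unfolding P2_def block_def by (simp add: add.assoc)
qed

lemma walk_check_block:
  assumes "encodes n v d" "n \<le> i" "s = c @ LMark n # d @ [MMark n]" "set s \<subseteq> larsen_marks i"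
  shows "walk i s (Seek [n], length s) v (Compare [n], length s)"
proof -
  have stack: "[n] \<in> level_stacks i" using level_stacks_single[OF assms(2)] .
  define a where "a = Suc (length c)"
  have "walk i s (Seek [n], length s) [] (Compare [n], a + 1)"
  proof (rule walk_seek[OF stack assms(4)])
    show "\<forall>k. a < k \<and> k \<le> length s \<longrightarrow> s ! (k - 1) \<noteq> LMark n"
      using encodes_no_LMark[OF assms(1), of s c "[]"] assms(3) unfolding a_def by simp
  qed (use assms(3) in \<open>simp_all add: a_def\<close>)
  moreover have "walk i s (Compare [n], a + 1) v (Compare [n], length s)"
    using walk_compare[OF assms(1) le_refl stack, of s "c @ [LMark n]" "[MMark n]"] assms
    unfolding a_def by simp
  ultimately show ?thesis using walk_trans by fastforce
qed

lemma run_scan_encodes: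
  assumes "encodes k w d" "k \<le> Suc i" "set cc \<subseteq> larsen_marks i" "cc \<noteq> []"
  shows "(sa_step (larsen_sa i))\<^sup>*\<^sup>* (Scan k, w @ u, cc, length cc) (Scan k, u, cc @ d, length (cc @ d))"
  using assms
proof (induction arbitrary: u cc rule: encodes.induct)
  case (encodes_Nil n)
  then show ?case by simp
next
  case (encodes_block n w c v d)
  let ?step = "sa_step (larsen_sa i)"
  define s1 where "s1 = cc @ c"
  define s2 where "s2 = s1 @ [LMark n] @ d"
  define s3 where "s3 = s2 @ [MMark n]"
  have n: "n \<le> i" using encodes_block.prems by simp
  have marks: "LMark n \<in> larsen_marks i" "MMark n \<in> larsen_marks i" "RMark n \<in> larsen_marks i"
    using n by (auto simp: larsen_marks_def)
  have s1: "set s1 \<subseteq> larsen_marks i" "s1 \<noteq> []"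
    using encodes_marks[OF encodes_block.hyps(1)] encodes_block.prems unfolding s1_def by auto
  have s2: "set s2 \<subseteq> larsen_marks i" "s2 \<noteq> []"
    using encodes_marks[OF encodes_block.hyps(2)] encodes_block.prems s1 marks unfolding s2_def by auto
  have last: "last s1 \<in> larsen_marks i" "last s2 \<in> larsen_marks i"
    using s1 s2 last_in_set by blast+
  have s3: "set s3 \<subseteq> larsen_marks i" using s2 marks unfolding s3_def by simp
  have "?step\<^sup>*\<^sup>* (Scan (Suc n), w @ block n v @ u, cc, length cc)
      (Scan (Suc n), block n v @ u, s1, length s1)"
    using encodes_block.IH(1)[of cc "block n v @ u"] encodes_block.prems unfolding s1_def by simp
  moreover have "?step (Scan (Suc n), block n v @ u, s1, length s1)
      (Scan n, v @ AM n # v @ AR n # u, s1 @ [LMark n], length (s1 @ [LMark n]))"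
    using sa_step_push[OF _ s1(2), of "Scan (Suc n)" "Some (AL n)" "Scan n" "[LMark n]" "larsen_sa i"]
      move_scan_AL[OF n last(1)] by (simp add: block_def)
  moreover have "?step\<^sup>*\<^sup>* (Scan n, v @ AM n # v @ AR n # u, s1 @ [LMark n], length (s1 @ [LMark n]))
      (Scan n, AM n # v @ AR n # u, s2, length s2)"
    using encodes_block.IH(2)[of "s1 @ [LMark n]" "AM n # v @ AR n # u"] encodes_block.prems s1 marks
    unfolding s2_def by simp
  moreover have "?step (Scan n, AM n # v @ AR n # u, s2, length s2) (Seek [n], v @ AR n # u, s3, length s3)"
    using sa_step_push[OF _ s2(2), of "Scan n" "Some (AM n)" "Seek [n]" "[MMark n]" "larsen_sa i"]
      move_scan_AM[OF n last(2)] unfolding s3_def by simp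
  moreover have "?step\<^sup>*\<^sup>* (Seek [n], v @ AR n # u, s3, length s3) (Compare [n], AR n # u, s3, length s3)"
    using walk_run[OF walk_check_block[OF encodes_block.hyps(2) n _ s3, of s1]]
    unfolding s3_def s2_def by simp
  moreover have "?step (Compare [n], AR n # u, s3, length s3) (Scan (Suc n), u, s3 @ [RMark n], length (s3 @ [RMark n]))"
    using sa_step_push[of "Compare [n]" "Some (AR n)" s3 "Scan (Suc n)" "[RMark n]"] move_compare_done[OF n]
    unfolding s3_def by simp
  ultimately show ?case
    unfolding s3_def s2_def s1_def by (simp add: block_def)
qed

lemma larsen_words_subset_sa_lang: "larsen_words (Suc i) \<subseteq> sa_lang (larsen_sa i)"
proof
  fix w assume "w \<in> larsen_words (Suc i)"
  then obtain d where "encodes (Suc i) w d" using larsen_words_encodes by blast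
  then have "(sa_step (larsen_sa i))\<^sup>*\<^sup>* (Scan (Suc i), w @ [], [Base], length [Base])
      (Scan (Suc i), [], [Base] @ d, length ([Base] @ d))"
    by (rule run_scan_encodes) (auto simp: larsen_marks_def)
  then show "w \<in> sa_lang (larsen_sa i)" unfolding sa_lang_def by auto
qed

section \<open>Soundness\<close>

text \<open>Stack and consumed input when Scan n is entered.\<close>

inductive open_blocks :: "nat \<Rightarrow> nat \<Rightarrow> mark list \<Rightarrow> letter list \<Rightarrow> bool" for i where
  open_blocks_top: "open_blocks i (Suc i) [Base] []"
| open_blocks_push: "open_blocks i (Suc n) c x \<Longrightarrow> encodes (Suc n) w d
    \<Longrightarrow> open_blocks i n (c @ d @ [LMark n]) (x @ w @ [AL n])"

lemma open_blocks_le: "open_blocks i k c x \<Longrightarrow> k \<le> Suc i"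
  by (induction rule: open_blocks.induct) auto

lemma open_blocks_marks: "open_blocks i k c x \<Longrightarrow> set c \<subseteq> larsen_marks i"
proof (induction rule: open_blocks.induct)
  case open_blocks_top
  then show ?case by (simp add: larsen_marks_def)
next
  case (open_blocks_push n c x w d)
  then show ?case
    using encodes_marks[OF open_blocks_push.hyps(2)] open_blocks_le[OF open_blocks_push.hyps(1)]
    by (auto simp: larsen_marks_def)
qed

lemma open_blocks_not_Nil: "open_blocks i k c x \<Longrightarrow> c \<noteq> []"
  by (induction rule: open_blocks.induct) auto

lemma open_blocks_SucD: "open_blocks i (Suc i) c x \<Longrightarrow> x = []"
  by (cases rule: open_blocks.cases) (auto dest: open_blocks_le)

lemma open_blocks_below:
  "open_blocks i n c x \<Longrightarrow> n \<le> i \<Longrightarrow> \<exists>c1 x1 w d. open_blocks i (Suc n) c1 x1 \<and> encodes (Suc n) w d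
     \<and> c = c1 @ d @ [LMark n] \<and> x = x1 @ w @ [AL n]"
  by (cases rule: open_blocks.cases) auto

definition scan_inv :: "nat \<Rightarrow> state \<Rightarrow> mark list \<Rightarrow> nat \<Rightarrow> letter list \<Rightarrow> bool" where
  "scan_inv i q s p x \<longleftrightarrow> (\<exists>n c x0 w d. q = Scan n \<and> open_blocks i n c x0 \<and> encodes n w d
     \<and> s = c @ d \<and> x = x0 @ w \<and> p = length s)"

text \<open>While the second copy of the innermost open block (level n) is checked: y has been matched, and
  the walk over the record reads the rest z.\<close>

definition compare_inv :: "nat \<Rightarrow> state \<Rightarrow> mark list \<Rightarrow> nat \<Rightarrow> letter list \<Rightarrow> bool" where
  "compare_inv i q s p x \<longleftrightarrow> (\<exists>n c1 x1 w' d' w d y z. (\<forall>m. q \<noteq> Scan m) \<and> n \<le> i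
     \<and> open_blocks i (Suc n) c1 x1 \<and> encodes (Suc n) w' d' \<and> encodes n w d
     \<and> s = c1 @ d' @ LMark n # d @ [MMark n] \<and> x = x1 @ w' @ AL n # w @ AM n # y
     \<and> walk i s (q, p) z (Compare [n], length s) \<and> y @ z = w)"

lemma scan_invI:
  "open_blocks i n c x0 \<Longrightarrow> encodes n w d \<Longrightarrow> scan_inv i (Scan n) (c @ d) (length (c @ d)) (x0 @ w)"
  unfolding scan_inv_def by blast

lemma compare_invI:
  assumes "\<forall>m. q \<noteq> Scan m" "n \<le> i" "open_blocks i (Suc n) c1 x1" "encodes (Suc n) w' d'" "encodes n w d"
    "s = c1 @ d' @ LMark n # d @ [MMark n]" "walk i s (q, p) z (Compare [n], length s)" "y @ z = w"
  shows "compare_inv i q s p (x1 @ w' @ AL n # w @ AM n # y)"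
  unfolding compare_inv_def using assms by blast

lemma scan_inv_step:
  assumes inv: "scan_inv i q s p x" and step: "sa_step (larsen_sa i) (q, u, s, p) (q', u', s', p')"
  shows "\<exists>a. u = list_of_opt a @ u'
    \<and> (scan_inv i q' s' p' (x @ list_of_opt a) \<or> compare_inv i q' s' p' (x @ list_of_opt a))"
proof -
  obtain n c x0 w d where I: "q = Scan n" "open_blocks i n c x0" "encodes n w d" "s = c @ d"
      "x = x0 @ w" "p = length s"
    using inv unfolding scan_inv_def by blast
  have ne: "s \<noteq> []" using open_blocks_not_Nil[OF I(2)] I(4) by simp
  obtain a act where t: "(q, a, sym_at s p, q', act) \<in> larsen_delta i" "u = list_of_opt a @ u'"
    "action_effect act s p s' p'"
    using step by (auto elim: sa_stepE)
  have "larsen_move (Scan n, a, G (last s), q', act)"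
    using t(1) I(1,6) sym_at_length[OF ne] by (simp add: larsen_delta_def)
  then consider (AL) n0 where "n = Suc n0" "a = Some (AL n0)" "q' = Scan n0" "act = Replace [last s, LMark n0]"
    | (AM) "a = Some (AM n)" "q' = Seek [n]" "act = Replace [last s, MMark n]"
    unfolding larsen_move_def by auto
  then show ?thesis
  proof cases
    case AL
    have "s' = c @ d @ [LMark n0]" "p' = length s'"
      using t(3) AL(4) butlast_append_last[OF ne, of "[LMark n0]"] I(4) by auto
    then have "scan_inv i q' s' p' (x @ list_of_opt a)"
      using scan_invI[OF open_blocks_push[of i n0 c x0 w d] encodes_Nil] I AL by simp
    then show ?thesis using t(2) by blast
  next
    case AM
    have s': "s' = s @ [MMark n]" "p' = length s'"
      using t(3) AM(3) butlast_append_last[OF ne, of "[MMark n]"] by auto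
    have n: "n \<le> i" using t(1) AM(2) by (auto simp: larsen_delta_def larsen_states_def level_stacks_def)
    obtain c1 x1 w' d' where C: "open_blocks i (Suc n) c1 x1" "encodes (Suc n) w' d'"
        "c = c1 @ d' @ [LMark n]" "x0 = x1 @ w' @ [AL n]"
      using open_blocks_below[OF I(2) n] by blast
    have s'_eq: "s' = c1 @ d' @ LMark n # d @ [MMark n]" using s' I(4) C(3) by simp
    have "set s' \<subseteq> larsen_marks i"
      using open_blocks_marks[OF I(2)] encodes_marks[OF I(3)] open_blocks_le[OF I(2)] n s' I(4)
      by (auto simp: larsen_marks_def)
    then have "walk i s' (Seek [n], length s') w (Compare [n], length s')"
      using walk_check_block[OF I(3) n _, of s' "c1 @ d'"] s'_eq by simp
    then have "compare_inv i q' s' p' (x @ list_of_opt a)"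
      using compare_invI[OF _ n C(1,2) I(3) s'_eq, of q' p' w "[]"] AM I(5) C(4) s'(2) by simp
    then show ?thesis using t(2) by blast
  qed
qed

lemma compare_inv_step:
  assumes inv: "compare_inv i q s p x" and step: "sa_step (larsen_sa i) (q, u, s, p) (q', u', s', p')"
  shows "\<exists>a. u = list_of_opt a @ u'
    \<and> (scan_inv i q' s' p' (x @ list_of_opt a) \<or> compare_inv i q' s' p' (x @ list_of_opt a))"
proof -
  obtain n c1 x1 w' d' w d y z where I: "\<forall>m. q \<noteq> Scan m" "n \<le> i" "open_blocks i (Suc n) c1 x1"
      "encodes (Suc n) w' d'" "encodes n w d" "s = c1 @ d' @ LMark n # d @ [MMark n]"
      "x = x1 @ w' @ AL n # w @ AM n # y" "walk i s (q, p) z (Compare [n], length s)" "y @ z = w"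
    using inv unfolding compare_inv_def by blast
  obtain a act where t: "(q, a, sym_at s p, q', act) \<in> larsen_delta i" "u = list_of_opt a @ u'"
    "action_effect act s p s' p'"
    using step by (auto elim: sa_stepE)
  have move: "larsen_move (q, a, sym_at s p, q', act)" using t(1) by (simp add: larsen_delta_def)
  have ne: "s \<noteq> []" and last: "last s = MMark n" using I(6) by simp_all
  show ?thesis
  proof (cases "\<exists>w0. act = Replace w0")
    case True
    then obtain h where h: "q = Compare [h]" "a = Some (AR h)" "q' = Scan (Suc h)"
        "act = Replace [MMark h, RMark h]"
      using move I(1) unfolding larsen_move_def by auto
    \<comment> \<open>off the Scan states the machine is deterministic, so replacing the top ends the walk\<close>
    have "q = Compare [n] \<and> z = []"
      using I(8)
    proof (cases rule: walk_cases)
      case (step a1 q1 act1 p1 z1)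
      then have "larsen_move (q, a1, sym_at s p, q1, act1)" by (simp add: larsen_delta_def)
      then have "act1 = act" using larsen_move_deterministic[OF move _ I(1)] by blast
      then show ?thesis using step(2) h(4) by auto
    qed simp
    then have n: "h = n" "y = w" using h(1) I(9) by auto
    have "s' = c1 @ (d' @ LMark n # d @ [MMark n, RMark n])" "p' = length s'"
      using t(3) h(4) butlast_append_last[OF ne, of "[RMark n]"] last I(6) n by auto
    then have "scan_inv i q' s' p' (x @ list_of_opt a)"
      using scan_invI[OF I(3) encodes_block[OF I(4,5)]] h n I(7) by (simp add: block_def)
    then show ?thesis using t(2) by blast
  next
    case False
    show ?thesis
      using I(8)
    proof (cases rule: walk_cases)
      case refl
      have "larsen_move (Compare [n], Some (AR n), G (MMark n), Scan (Suc n), Replace [MMark n, RMark n])"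
        using move_compare_done[OF I(2)] by (simp add: larsen_delta_def)
      moreover have "larsen_move (Compare [n], a, G (MMark n), q', act)"
        using move refl sym_at_length[OF ne] last by simp
      ultimately show ?thesis using larsen_move_deterministic False by blast
    next
      case (step a1 q1 act1 p1 z1)
      then have "larsen_move (q, a1, sym_at s p, q1, act1)" by (simp add: larsen_delta_def)
      then have eq: "a1 = a" "q1 = q'" "act1 = act" using larsen_move_deterministic[OF move _ I(1)] by auto
      have "s' = s" "p' = p1" using action_effect_deterministic[OF t(3)] step(3) eq(3) by auto
      moreover have "\<forall>m. q' \<noteq> Scan m" using larsen_move_not_Scan[OF move I(1)] False by blast
      ultimately have "compare_inv i q' s' p' (x1 @ w' @ AL n # w @ AM n # y @ list_of_opt a)"
        using compare_invI[OF _ I(2-6)] step(4,5) I(9) eq by simp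
      then show ?thesis using t(2) I(7) by auto
    qed
  qed
qed

lemma reachable_inv:
  assumes "(sa_step (larsen_sa i))\<^sup>*\<^sup>* (Scan (Suc i), inp, [Base], 1) c"
  shows "case c of (q, u, s, p) \<Rightarrow> \<exists>x. inp = x @ u \<and> (scan_inv i q s p x \<or> compare_inv i q s p x)"
  using assms
proof (induction rule: rtranclp_induct)
  case base
  show ?case using scan_invI[OF open_blocks_top encodes_Nil, of i] by simp
next
  case (step b c)
  obtain q u s p where b: "b = (q, u, s, p)" by (cases b)
  obtain q' u' s' p' where c: "c = (q', u', s', p')" by (cases c)
  obtain x where x: "inp = x @ u" "scan_inv i q s p x \<or> compare_inv i q s p x" using step.IH b by auto
  have st: "sa_step (larsen_sa i) (q, u, s, p) (q', u', s', p')" using step.hyps(2) b c by simp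
  have "\<exists>a. u = list_of_opt a @ u'
      \<and> (scan_inv i q' s' p' (x @ list_of_opt a) \<or> compare_inv i q' s' p' (x @ list_of_opt a))"
    using x(2) scan_inv_step[OF _ st] compare_inv_step[OF _ st] by blast
  then show ?case using x(1) c by auto
qed

lemma sa_lang_subset_larsen_words: "sa_lang (larsen_sa i) \<subseteq> larsen_words (Suc i)"
proof
  fix w assume "w \<in> sa_lang (larsen_sa i)"
  then obtain s p where "(sa_step (larsen_sa i))\<^sup>*\<^sup>* (Scan (Suc i), w, [Base], 1) (Scan (Suc i), [], s, p)"
    unfolding sa_lang_def by auto
  then have "scan_inv i (Scan (Suc i)) s p w"
    using reachable_inv unfolding compare_inv_def by fastforce
  then obtain c x0 w1 d where "open_blocks i (Suc i) c x0" "encodes (Suc i) w1 d" "w = x0 @ w1"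
    unfolding scan_inv_def by auto
  then show "w \<in> larsen_words (Suc i)"
    using open_blocks_SucD encodes_larsen_words by (metis append_Nil)
qed

lemma sa_lang_larsen_sa: "sa_lang (larsen_sa i) = larsen_words (Suc i)"
  using sa_lang_subset_larsen_words larsen_words_subset_sa_lang by blast

instance state :: countable by countable_datatype
instance mark :: countable by countable_datatype

theorem theorem3:
  shows "\<forall>i::nat. \<exists>A :: (nat, nat) sa. sa_wf A \<and> nonerasing A \<and> sa_lang A = rewb_lang (larsen i)"
proof
  fix i
  let ?A = "sa_rename to_nat to_nat (larsen_sa i)"
  have "sa_lang ?A = rewb_lang (larsen i)"
    using sa_lang_rename[OF inj_to_nat inj_to_nat, of "larsen_sa i"] sa_lang_larsen_sa rewb_lang_larsen
    by (simp del: larsen_words.simps)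
  moreover have "sa_wf ?A" by (rule sa_wf_rename[OF larsen_sa_wf])
  moreover have "nonerasing ?A" by (rule nonerasing_rename[OF larsen_sa_nonerasing])
  ultimately show "\<exists>A :: (nat, nat) sa. sa_wf A \<and> nonerasing A \<and> sa_lang A = rewb_lang (larsen i)"
    by blast
qed

end
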